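(* Let $\mathbf{k}$ be an algebraically closed field, $V=\mathbf{k}^n$, $G=\mathrm{GL}(V)$, $\underline{G}=G\ltimes V$. Let $\lambda[q]$ be an enhanced partition of $n$, $\lambda=(a_1\ge\dots\ge a_t>0)$, let $X$ be nilpotent of Jordan type $\lambda$ with Jordan basis $\{X^kv_i:1\le i\le t,0\le k\le a_i-1\}$ ($X^{a_i}v_i=0$), and put $$\hat w=\sum_{i=1}^{q}\sum_{k=1}^{a_i-1}X^kv_i+\sum_{i=q+1}^{t}\sum_{k=0}^{a_i-1}X^kv_i.$$ Then $\overline{\mathcal{O}_{\lambda[q]}}=\overline{G\cdot(X,\hat w)}$, where $G\cdot(X,\hat w)=\{(gXg^{-1},g\hat w):g\in G\}$.
   Context: $\underline{G}$ is $G\times V$ with product $(g_1,v_1)(g_2,v_2)=(g_1g_2,g_1v_2+v_1)$ and adjoint action $\mathrm{Ad}(g,v)(X,w)=(gXg^{-1},-(gXg^{-1})v+gw)$. Write $\lambda=(b_1^{d_1}\cdots b_r^{d_r})$ with $b_1>\dots>b_r$ (each $b_i$ occurring $d_i>0$ times), $d_0=0$; an enhanced partition $\lambda[q]$ has $q\in\{d_0+\dots+d_{j-1}:1\le j\le r+1\}$. With $u_j=v_{d_1+\dots+d_j}$ ($1\le j\le r$), $u_{r+1}=0$, $\mathcal{O}_{\lambda[q]}$ is the $\underline{G}$-orbit of $(X,u_j)$ where $q=d_0+\dots+d_{j-1}$. Closures are Zariski closures in $\mathfrak{gl}(V)\times V$. *)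

theory Defs
  imports "HOL-Analysis.Analysis" "HOL-Computational_Algebra.Polynomial"
begin

inductive_set polyfun :: "((('a::field^'n^'n) \<times> ('a^'n)) \<Rightarrow> 'a) set" where
  pf_const: "(\<lambda>p. c) \<in> polyfun"
| pf_mat:   "(\<lambda>p. fst p $ i $ j) \<in> polyfun"
| pf_vec:   "(\<lambda>p. snd p $ i) \<in> polyfun"
| pf_add:   "f \<in> polyfun \<Longrightarrow> g \<in> polyfun \<Longrightarrow> (\<lambda>p. f p + g p) \<in> polyfun"
| pf_mult:  "f \<in> polyfun \<Longrightarrow> g \<in> polyfun \<Longrightarrow> (\<lambda>p. f p * g p) \<in> polyfun"

definition zariski_closed :: "(('a::field^'n^'n) \<times> ('a^'n)) set \<Rightarrow> bool" where
  "zariski_closed S \<longleftrightarrow> (\<exists>F. F \<subseteq> polyfun \<and> S = {p. \<forall>f\<in>F. f p = 0})"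

definition zariski_closure :: "(('a::field^'n^'n) \<times> ('a^'n)) set \<Rightarrow> (('a^'n^'n) \<times> ('a^'n)) set" where
  "zariski_closure A = \<Inter>{S. zariski_closed S \<and> A \<subseteq> S}"

definition Ad_sdp :: "'a::field^'n^'n \<Rightarrow> 'a^'n \<Rightarrow> (('a^'n^'n) \<times> ('a^'n)) \<Rightarrow> (('a^'n^'n) \<times> ('a^'n))" where
  "Ad_sdp g v p = (let Y = g ** fst p ** matrix_inv g in (Y, - (Y *v v) + g *v snd p))"

definition sdp_orbit :: "(('a::field^'n^'n) \<times> ('a^'n)) \<Rightarrow> (('a^'n^'n) \<times> ('a^'n)) set" where
  "sdp_orbit p = {Ad_sdp g v p | g v. invertible g}"

definition GL_orbit :: "(('a::field^'n^'n) \<times> ('a^'n)) \<Rightarrow> (('a^'n^'n) \<times> ('a^'n)) set" where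
  "GL_orbit p = {(g ** fst p ** matrix_inv g, g *v snd p) | g. invertible g}"

definition mpow_app :: "'a::field^'n^'n \<Rightarrow> nat \<Rightarrow> 'a^'n \<Rightarrow> 'a^'n" where
  "mpow_app X k w = ((\<lambda>x. X *v x) ^^ k) w"

definition is_partition :: "nat \<Rightarrow> (nat \<Rightarrow> nat) \<Rightarrow> nat \<Rightarrow> bool" where
  "is_partition m a t \<longleftrightarrow> (\<forall>i\<in>{1..t}. a i > 0) \<and> (\<forall>i j. 1 \<le> i \<longrightarrow> i \<le> j \<longrightarrow> j \<le> t \<longrightarrow> a j \<le> a i)
     \<and> (\<Sum>i=1..t. a i) = m"

definition jb_index :: "(nat \<Rightarrow> nat) \<Rightarrow> nat \<Rightarrow> (nat \<times> nat) set" where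
  "jb_index a t = {(i,k). 1 \<le> i \<and> i \<le> t \<and> k < a i}"

definition jordan_basis :: "'a::field^'n^'n \<Rightarrow> (nat \<Rightarrow> nat) \<Rightarrow> nat \<Rightarrow> (nat \<Rightarrow> 'a^'n) \<Rightarrow> bool" where
  "jordan_basis X a t v \<longleftrightarrow>
     (\<forall>i\<in>{1..t}. mpow_app X (a i) (v i) = 0) \<and>
     inj_on (\<lambda>(i,k). mpow_app X k (v i)) (jb_index a t) \<and>
     vec.independent ((\<lambda>(i,k). mpow_app X k (v i)) ` jb_index a t) \<and>
     vec.span ((\<lambda>(i,k). mpow_app X k (v i)) ` jb_index a t) = UNIV"

text \<open>Enhanced partition \<lambda>[q]: q = d_0 + ... + d_{j-1} for some 1 \<le> j \<le> r+1, i.e. q is 0, t,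
  or a boundary between two distinct part sizes.\<close>
definition enhanced_index :: "(nat \<Rightarrow> nat) \<Rightarrow> nat \<Rightarrow> nat \<Rightarrow> bool" where
  "enhanced_index a t q \<longleftrightarrow> q \<le> t \<and> (q = 0 \<or> q = t \<or> a (Suc q) < a q)"

text \<open>The vector u_j = v_{d_1+...+d_j} where q = d_0+...+d_{j-1} (u_{r+1} = 0): the generator of the
  last Jordan block of size b_j = a_{q+1}.\<close>
definition enh_vec :: "(nat \<Rightarrow> nat) \<Rightarrow> nat \<Rightarrow> (nat \<Rightarrow> 'a::field^'n) \<Rightarrow> nat \<Rightarrow> 'a^'n" where
  "enh_vec a t v q = (if q = t then 0 else v (GREATEST i. i \<le> t \<and> a i = a (Suc q)))"

definition enh_orbit :: "'a::field^'n^'n \<Rightarrow> (nat \<Rightarrow> nat) \<Rightarrow> nat \<Rightarrow> (nat \<Rightarrow> 'a^'n) \<Rightarrow> nat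
     \<Rightarrow> (('a^'n^'n) \<times> ('a^'n)) set" where
  "enh_orbit X a t v q = sdp_orbit (X, enh_vec a t v q)"

end

theory Submission
  imports Defs
begin

text \<open>The G \<ltimes> V-orbit of (X, u) is the union of the GL(V)-orbits of the points (X, u + X w),
  so everything happens in the centralizer of X. A matrix commuting with X may send each
  Jordan generator v i to any vector killed by X^(a i), and it is invertible as soon as every
  v i goes to a nonzero multiple of itself modulo the range of X. One such matrix moves u into
  w_hat + range X, which puts the GL(V)-orbit of (X, w_hat) inside the orbit of (X, u).
  Conversely, for every w there is a line through u + X w all but finitely many of whose points
  are images of w_hat under the centralizer; a polynomial vanishing on the GL(V)-orbit of
  (X, w_hat) then vanishes on (a translate of) that line, hence at (X, u + X w).\<close>

lemma mpow_app_0 [simp]: "mpow_app X 0 w = w"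
  by (simp add: mpow_app_def)

lemma mpow_app_Suc: "mpow_app X (Suc k) w = X *v mpow_app X k w"
  by (simp add: mpow_app_def)

lemma mpow_app_Suc_right: "mpow_app X (Suc k) w = mpow_app X k (X *v w)"
  by (simp add: mpow_app_def funpow_Suc_right del: funpow.simps)

lemma mpow_app_add: "mpow_app X (j + k) w = mpow_app X j (mpow_app X k w)"
  by (simp add: mpow_app_def funpow_add)

definition matpow :: "'a::field^'n^'n \<Rightarrow> nat \<Rightarrow> 'a^'n^'n" where
  "matpow X k = ((**) X ^^ k) (mat 1)"

lemma mpow_app_eq_matpow: "mpow_app X k w = matpow X k *v w"
  by (induction k) (simp_all add: mpow_app_def matpow_def matrix_vector_mul_assoc[symmetric])

lemma mpow_app_linear [simp]:
  "mpow_app X k (x + y) = mpow_app X k x + mpow_app X k y"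
  "mpow_app X k (c *s x) = c *s mpow_app X k x"
  "mpow_app X k (- x) = - mpow_app X k x"
  "mpow_app X k (x - y) = mpow_app X k x - mpow_app X k y"
  "mpow_app X k 0 = 0"
  "mpow_app X k (sum f S) = (\<Sum>i\<in>S. mpow_app X k (f i))"
  by (simp_all add: mpow_app_eq_matpow vec.add vec.scale vec.neg vec.diff vec.sum)

lemma mpow_app_commute:
  assumes "M ** X = X ** M"
  shows "M *v mpow_app X k w = mpow_app X k (M *v w)"
proof (induction k)
  case (Suc k)
  have "M *v mpow_app X (Suc k) w = X *v (M *v mpow_app X k w)"
    by (simp add: mpow_app_Suc matrix_vector_mul_assoc assms)
  then show ?case
    by (simp add: Suc mpow_app_Suc)
qed simp

lemma mpow_app_commute_pow: "mpow_app X j (mpow_app X k w) = mpow_app X k (mpow_app X j w)"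
  by (metis add.commute mpow_app_add)

lemma sum_mpow_app_shift:
  assumes "mpow_app X n w = 0"
  shows "(\<Sum>k<n. c k *s mpow_app X k w) = c 0 *s w + X *v (\<Sum>k<n. c (Suc k) *s mpow_app X k w)"
proof -
  have "(\<Sum>k<n. c k *s mpow_app X k w) = (\<Sum>k<Suc n. c k *s mpow_app X k w)"
    using assms by simp
  also have "\<dots> = c 0 *s w + (\<Sum>k<n. c (Suc k) *s mpow_app X (Suc k) w)"
    by (subst sum.lessThan_Suc_shift) simp
  finally show ?thesis
    by (simp add: vec.sum vec.scale mpow_app_Suc)
qed

lemma matrix_inv_right: "invertible g \<Longrightarrow> g ** matrix_inv g = mat 1"
  and matrix_inv_left: "invertible g \<Longrightarrow> matrix_inv g ** g = mat 1"
  for g :: "'a::field^'n^'n"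
  using someI_ex[of "\<lambda>g'. g ** g' = mat 1 \<and> g' ** g = mat 1"]
  unfolding invertible_def matrix_inv_def by auto

lemma conjugate_eq:
  fixes g :: "'a::field^'n^'n"
  assumes "invertible g" "g ** X = Y ** g"
  shows "g ** X ** matrix_inv g = Y"
  by (metis assms matrix_inv_right matrix_mul_assoc matrix_mul_rid)

lemma matrix_inv_commute:
  fixes g :: "'a::field^'n^'n"
  assumes "invertible g" "g ** X = X ** g"
  shows "matrix_inv g ** X = X ** matrix_inv g"
  by (metis assms conjugate_eq matrix_inv_left matrix_mul_assoc matrix_mul_lid)

lemma centralizer_mult:
  fixes A B X :: "'a::semiring_1^'n^'n"
  assumes "A ** X = X ** A" "B ** X = X ** B"
  shows "(A ** B) ** X = X ** (A ** B)"
  by (metis assms matrix_mul_assoc)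

lemma invertible_mat_1_add_square_zero:
  fixes N :: "'a::field^'n^'n"
  assumes "N ** N = 0"
  shows "invertible (mat 1 + N)"
proof -
  have NN: "N *v (N *v x) = 0" for x
    by (simp add: matrix_vector_mul_assoc assms)
  have "(mat 1 + N) ** (mat 1 - N) = mat 1"
    unfolding matrix_eq
    by (simp add: matrix_vector_mul_assoc[symmetric] matrix_vector_mult_add_rdistrib
        matrix_vector_mult_diff_rdistrib vec.diff NN)
  then show ?thesis
    using invertible_right_inverse by blast
qed

text \<open>A vector in the kernel of M lies in the range of every power of X.\<close>
lemma invertible_mod_nilpotent_range:
  fixes X D M :: "'a::field^'n^'n"
  assumes nil: "\<And>x. mpow_app X N x = 0"
    and MX: "M ** X = X ** M" and DX: "D ** X = X ** D" and D: "invertible D"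
    and MD: "\<And>x. \<exists>y. M *v x = D *v x + X *v y"
  shows "invertible M"
proof -
  have D'X: "matrix_inv D ** X = X ** matrix_inv D"
    by (rule matrix_inv_commute[OF D DX])
  have in_range: "\<exists>z. x = mpow_app X j z" if Mx: "M *v x = 0" for x j
  proof (induction j)
    case (Suc j)
    then obtain z where xz: "x = mpow_app X j z"
      by blast
    obtain y where y: "M *v z = D *v z + X *v y"
      using MD by blast
    have "0 = mpow_app X j (M *v z)"
      using Mx xz mpow_app_commute[OF MX] by simp
    also have "\<dots> = D *v x + mpow_app X (Suc j) y"
      using xz mpow_app_commute[OF DX] by (simp add: y mpow_app_Suc_right)
    finally have "D *v x = - mpow_app X (Suc j) y"
      by (simp add: eq_neg_iff_add_eq_0)
    then have "matrix_inv D *v (D *v x) = mpow_app X (Suc j) (- (matrix_inv D *v y))"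
      by (simp add: mpow_app_commute[OF D'X] vec.neg)
    then have "x = mpow_app X (Suc j) (- (matrix_inv D *v y))"
      by (simp add: matrix_vector_mul_assoc matrix_inv_left[OF D])
    then show ?case ..
  qed simp
  have "inj ((*v) M)"
  proof (rule injI)
    fix x y
    assume "M *v x = M *v y"
    then have "M *v (x - y) = 0"
      by (simp add: vec.diff)
    with in_range[of "x - y" N] nil show "x = y"
      by auto
  qed
  then show ?thesis
    using matrix_left_invertible_injective invertible_left_inverse by blast
qed

lemma zariski_closure_eq:
  "zariski_closure A = {p. \<forall>f\<in>polyfun. (\<forall>y\<in>A. f y = 0) \<longrightarrow> f p = 0}"
proof (intro equalityI subsetI CollectI ballI impI)
  fix p f
  assume p: "p \<in> zariski_closure A" and f: "f \<in> polyfun" "\<forall>y\<in>A. f y = 0"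
  have "zariski_closed {p. f p = 0}"
    unfolding zariski_closed_def using f(1) by (intro exI[of _ "{f}"]) auto
  with p f(2) show "f p = 0"
    unfolding zariski_closure_def by blast
next
  fix p
  assume "p \<in> {p. \<forall>f\<in>polyfun. (\<forall>y\<in>A. f y = 0) \<longrightarrow> f p = 0}"
  then show "p \<in> zariski_closure A"
    unfolding zariski_closure_def zariski_closed_def by blast
qed

lemma zariski_closure_mono: "A \<subseteq> B \<Longrightarrow> zariski_closure A \<subseteq> zariski_closure B"
  unfolding zariski_closure_def by blast

lemma zariski_closure_minimal:
  assumes "A \<subseteq> zariski_closure B"
  shows "zariski_closure A \<subseteq> zariski_closure B"
proof -
  have "zariski_closed (zariski_closure B)"
    unfolding zariski_closed_def zariski_closure_eq[of B]
    by (intro exI[of _ "{f\<in>polyfun. \<forall>y\<in>B. f y = 0}"]) auto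
  with assms show ?thesis
    unfolding zariski_closure_def[of A] by blast
qed

lemma polyfun_on_line:
  fixes Y :: "'a::field^'n^'n"
  assumes "f \<in> polyfun"
  shows "\<exists>P. \<forall>s. f (Y, y0 + s *s y1) = poly P s"
  using assms
proof (induction rule: polyfun.induct)
  case (pf_const c)
  show ?case by (intro exI[of _ "[:c:]"]) simp
next
  case (pf_mat i j)
  show ?case by (intro exI[of _ "[:Y $ i $ j:]"]) simp
next
  case (pf_vec i)
  show ?case by (intro exI[of _ "[:y0 $ i, y1 $ i:]"]) (simp add: mult.commute)
next
  case (pf_add f g)
  then obtain P Q where "\<forall>s. f (Y, y0 + s *s y1) = poly P s" "\<forall>s. g (Y, y0 + s *s y1) = poly Q s"
    by blast
  then show ?case by (intro exI[of _ "P + Q"]) simp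
next
  case (pf_mult f g)
  then obtain P Q where "\<forall>s. f (Y, y0 + s *s y1) = poly P s" "\<forall>s. g (Y, y0 + s *s y1) = poly Q s"
    by blast
  then show ?case by (intro exI[of _ "P * Q"]) simp
qed

text \<open>A polynomial vanishing at infinitely many points of a line vanishes on all of it.\<close>
lemma zariski_closure_line:
  fixes Y :: "'a::field^'n^'n"
  assumes "infinite {s. (Y, y0 + s *s y1) \<in> A}"
  shows "(Y, y0) \<in> zariski_closure A"
  unfolding zariski_closure_eq
proof (intro CollectI ballI impI)
  fix f
  assume f: "f \<in> polyfun" "\<forall>y\<in>A. f y = 0"
  obtain P where P: "\<And>s. f (Y, y0 + s *s y1) = poly P s"
    using polyfun_on_line[OF f(1)] by blast
  have "{s. (Y, y0 + s *s y1) \<in> A} \<subseteq> {s. poly P s = 0}"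
    using f(2) by (auto simp flip: P)
  with assms have "P = 0"
    using poly_roots_finite finite_subset by blast
  then show "f (Y, y0) = 0"
    using P[of 0] by simp
qed

lemma infinite_UNIV_alg_closed_field: "infinite (UNIV :: 'a::alg_closed_field set)"
proof
  assume fin: "finite (UNIV :: 'a set)"
  define p :: "'a poly" where "p = [:1:] + (\<Prod>x\<in>UNIV. [:-x, 1:])"
  have "degree (\<Prod>x\<in>(UNIV::'a set). [:-x, 1:]) = card (UNIV :: 'a set)"
    by (subst degree_prod_eq_sum_degree) auto
  moreover have "card (UNIV :: 'a set) > 0"
    using fin by (simp add: card_gt_0_iff)
  ultimately have "degree p > 0"
    unfolding p_def by (subst degree_add_eq_right) simp_all
  then obtain x where "poly p x = 0"
    using alg_closed_imp_poly_has_root by blast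
  moreover have "poly p x = 1"
    unfolding p_def using fin by (simp add: poly_prod prod_zero_iff)
  ultimately show False
    by simp
qed

lemma Ad_sdp_eq:
  fixes g :: "'a::field^'n^'n"
  assumes "invertible g"
  shows "Ad_sdp g v (Z, y) = (g ** Z ** matrix_inv g, g *v (y + Z *v (- (matrix_inv g *v v))))"
  unfolding Ad_sdp_def Let_def
  by (simp add: matrix_vector_mul_assoc[symmetric] vec.add vec.neg vec.diff)

lemma sdp_orbit_eq_Union_GL_orbit:
  "sdp_orbit (Z, y) = (\<Union>w. GL_orbit (Z, y + Z *v w))"
proof (intro equalityI subsetI)
  fix p
  assume "p \<in> sdp_orbit (Z, y)"
  then obtain g v where "invertible g" "p = Ad_sdp g v (Z, y)"
    unfolding sdp_orbit_def by blast
  then show "p \<in> (\<Union>w. GL_orbit (Z, y + Z *v w))"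
    unfolding GL_orbit_def by (auto simp: Ad_sdp_eq)
next
  fix p
  assume "p \<in> (\<Union>w. GL_orbit (Z, y + Z *v w))"
  then obtain g w where g: "invertible g" and p: "p = (g ** Z ** matrix_inv g, g *v (y + Z *v w))"
    unfolding GL_orbit_def by auto
  have "p = Ad_sdp g (- (g *v w)) (Z, y)"
    by (simp add: p Ad_sdp_eq[OF g] vec.neg matrix_vector_mul_assoc matrix_inv_left[OF g])
  with g show "p \<in> sdp_orbit (Z, y)"
    unfolding sdp_orbit_def by blast
qed

lemma GL_orbit_centralizer_subset:
  fixes g :: "'a::field^'n^'n"
  assumes g: "invertible g" and gX: "g ** X = X ** g"
  shows "GL_orbit (X, g *v y) \<subseteq> GL_orbit (X, y)"
proof
  fix p
  assume "p \<in> GL_orbit (X, g *v y)"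
  then obtain h where h: "invertible h" and p: "p = (h ** X ** matrix_inv h, h *v (g *v y))"
    unfolding GL_orbit_def by auto
  have "(h ** X ** matrix_inv h) ** (h ** g) = h ** X ** (matrix_inv h ** h) ** g"
    by (simp add: matrix_mul_assoc)
  also have "\<dots> = (h ** g) ** X"
    by (metis gX matrix_inv_left[OF h] matrix_mul_assoc matrix_mul_rid)
  finally have "(h ** g) ** X ** matrix_inv (h ** g) = h ** X ** matrix_inv h"
    using conjugate_eq invertible_mult[OF h g] by metis
  then have "p = ((h ** g) ** X ** matrix_inv (h ** g), (h ** g) *v y)"
    by (simp add: p matrix_vector_mul_assoc)
  then show "p \<in> GL_orbit (X, y)"
    unfolding GL_orbit_def using invertible_mult[OF h g] by auto
qed

lemma GL_orbit_centralizer: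
  fixes g :: "'a::field^'n^'n"
  assumes g: "invertible g" and gX: "g ** X = X ** g"
  shows "GL_orbit (X, g *v y) = GL_orbit (X, y)"
proof
  have "invertible (matrix_inv g)"
    using g matrix_inv_left matrix_inv_right invertible_def by blast
  then have "GL_orbit (X, matrix_inv g *v (g *v y)) \<subseteq> GL_orbit (X, g *v y)"
    by (rule GL_orbit_centralizer_subset[OF _ matrix_inv_commute[OF g gX]])
  then show "GL_orbit (X, y) \<subseteq> GL_orbit (X, g *v y)"
    by (simp add: matrix_vector_mul_assoc matrix_inv_left[OF g])
qed (rule GL_orbit_centralizer_subset[OF g gX])

locale jordan_nilpotent =
  fixes X :: "'a::field^'n::finite^'n" and a :: "nat \<Rightarrow> nat" and t :: nat
    and v :: "nat \<Rightarrow> 'a^'n"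
  assumes partition: "is_partition CARD('n) a t"
    and jordan: "jordan_basis X a t v"
begin

abbreviation J :: "(nat \<times> nat) set" where
  "J \<equiv> jb_index a t"

definition jb_vec :: "nat \<times> nat \<Rightarrow> 'a^'n" where
  "jb_vec = (\<lambda>(i, k). mpow_app X k (v i))"

lemma jb_index_iff: "(i, k) \<in> J \<longleftrightarrow> i \<in> {1..t} \<and> k < a i"
  by (simp add: jb_index_def)

lemma jb_index_eq_Sigma: "J = Sigma {1..t} (\<lambda>i. {..<a i})"
  by (auto simp: jb_index_iff)

lemma jb_independent: "vec.independent (jb_vec ` J)"
  and jb_span: "vec.span (jb_vec ` J) = UNIV"
  and inj_on_jb_vec: "inj_on jb_vec J"
  and mpow_app_part_vanish: "i \<in> {1..t} \<Longrightarrow> mpow_app X (a i) (v i) = 0"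
  using jordan unfolding jordan_basis_def jb_vec_def by auto

lemma part_pos: "i \<in> {1..t} \<Longrightarrow> 0 < a i"
  and part_antimono: "1 \<le> i \<Longrightarrow> i \<le> j \<Longrightarrow> j \<le> t \<Longrightarrow> a j \<le> a i"
  using partition unfolding is_partition_def by auto

lemma part_le_card:
  assumes "i \<in> {1..t}"
  shows "a i \<le> CARD('n)"
proof -
  have "a i \<le> (\<Sum>j=1..t. a j)"
    using assms by (intro member_le_sum) auto
  with partition show ?thesis
    unfolding is_partition_def by simp
qed

lemma finite_jb_index: "finite J"
proof (rule finite_subset)
  show "J \<subseteq> {1..t} \<times> {..<CARD('n)}"
    using part_le_card by (fastforce simp: jb_index_def)
qed simp

lemma mpow_app_vanish: "i \<in> {1..t} \<Longrightarrow> a i \<le> p \<Longrightarrow> mpow_app X p (v i) = 0"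
  using mpow_app_part_vanish[of i] mpow_app_add[of X "p - a i" "a i" "v i"] by simp

lemma matrix_eq_on_jb:
  assumes "\<And>i k. (i, k) \<in> J \<Longrightarrow> A *v mpow_app X k (v i) = C *v mpow_app X k (v i)"
  shows "A = C"
  unfolding matrix_eq
proof
  fix x
  show "A *v x = C *v x"
    by (rule vec.linear_eq_on_span[where B = "jb_vec ` J"])
      (use assms jb_span in \<open>auto simp: jb_vec_def\<close>)
qed

lemma nilpotent: "mpow_app X CARD('n) x = 0"
proof -
  have "matpow X CARD('n) = 0"
  proof (rule matrix_eq_on_jb)
    fix i k
    assume "(i, k) \<in> J"
    then have "mpow_app X (CARD('n) + k) (v i) = 0"
      using part_le_card[of i] by (intro mpow_app_vanish) (auto simp: jb_index_iff)
    then show "matpow X CARD('n) *v mpow_app X k (v i) = 0 *v mpow_app X k (v i)"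
      by (simp add: mpow_app_eq_matpow[symmetric] mpow_app_add[symmetric])
  qed
  then show ?thesis
    by (simp add: mpow_app_eq_matpow)
qed

lemma centralizer_eq:
  assumes "A ** X = X ** A" "C ** X = X ** C" "\<And>i. i \<in> {1..t} \<Longrightarrow> A *v v i = C *v v i"
  shows "A = C"
  by (rule matrix_eq_on_jb) (simp add: jb_index_iff mpow_app_commute assms)

lemma centralizer_exists:
  assumes \<phi>: "\<And>i. i \<in> {1..t} \<Longrightarrow> mpow_app X (a i) (\<phi> i) = 0"
  shows "\<exists>M. M ** X = X ** M \<and> (\<forall>i\<in>{1..t}. M *v v i = \<phi> i)"
proof -
  define f where "f x = (case inv_into J jb_vec x of (i, k) \<Rightarrow> mpow_app X k (\<phi> i))" for x
  define M where "M = matrix (vec.construct (jb_vec ` J) f)"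
  have M_jb: "M *v mpow_app X k (v i) = mpow_app X k (\<phi> i)" if "(i, k) \<in> J" for i k
  proof -
    have "M *v jb_vec (i, k) = vec.construct (jb_vec ` J) f (jb_vec (i, k))"
      unfolding M_def by (rule matrix_works[OF vec.linear_construct[OF jb_independent]])
    also have "\<dots> = mpow_app X k (\<phi> i)"
      using that by (simp add: vec.construct_basis[OF jb_independent] f_def inv_into_f_f[OF inj_on_jb_vec])
    finally show ?thesis
      by (simp add: jb_vec_def)
  qed
  have "M ** X = X ** M"
  proof (rule matrix_eq_on_jb)
    fix i k
    assume ik: "(i, k) \<in> J"
    have "(M ** X) *v mpow_app X k (v i) = mpow_app X (Suc k) (\<phi> i)"
    proof (cases "Suc k < a i")
      case True
      with ik show ?thesis
        by (simp add: matrix_vector_mul_assoc[symmetric] mpow_app_Suc[symmetric] M_jb jb_index_iff)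
    next
      case False
      with ik have "Suc k = a i"
        by (simp add: jb_index_iff)
      with ik show ?thesis
        by (simp add: matrix_vector_mul_assoc[symmetric] mpow_app_Suc[symmetric] jb_index_iff
            mpow_app_part_vanish \<phi>)
    qed
    also have "\<dots> = (X ** M) *v mpow_app X k (v i)"
      using ik by (simp add: matrix_vector_mul_assoc[symmetric] mpow_app_Suc M_jb)
    finally show "(M ** X) *v mpow_app X k (v i) = (X ** M) *v mpow_app X k (v i)" .
  qed
  moreover have "M *v v i = \<phi> i" if "i \<in> {1..t}" for i
    using M_jb[of i 0] that part_pos[of i] by (simp add: jb_index_iff)
  ultimately show ?thesis
    by blast
qed

lemma invertible_centralizer_exists:
  assumes c: "\<And>i. i \<in> {1..t} \<Longrightarrow> c i \<noteq> 0"
    and y: "\<And>i. i \<in> {1..t} \<Longrightarrow> mpow_app X (a i) (y i) = 0"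
  shows "\<exists>M. invertible M \<and> M ** X = X ** M \<and> (\<forall>i\<in>{1..t}. M *v v i = c i *s v i + X *v y i)"
proof -
  obtain D where DX: "D ** X = X ** D" and Dv: "\<forall>i\<in>{1..t}. D *v v i = c i *s v i"
    using centralizer_exists[of "\<lambda>i. c i *s v i"] by (auto simp: mpow_app_part_vanish)
  obtain D' where D'X: "D' ** X = X ** D'" and D'v: "\<forall>i\<in>{1..t}. D' *v v i = inverse (c i) *s v i"
    using centralizer_exists[of "\<lambda>i. inverse (c i) *s v i"] by (auto simp: mpow_app_part_vanish)
  obtain Y where YX: "Y ** X = X ** Y" and Yv: "\<forall>i\<in>{1..t}. Y *v v i = y i"
    using centralizer_exists[of y] y by blast
  have "D' ** D = mat 1"
    by (rule centralizer_eq[OF centralizer_mult[OF D'X DX]])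
      (use c Dv D'v in \<open>simp_all flip: matrix_vector_mul_assoc add: vec.scale\<close>)
  then have D: "invertible D"
    using invertible_left_inverse by blast
  define M where "M = D + X ** Y"
  have "D *v (X *v x) = X *v (D *v x)" "Y *v (X *v x) = X *v (Y *v x)" for x
    by (simp_all add: matrix_vector_mul_assoc DX YX)
  then have MX: "M ** X = X ** M"
    unfolding M_def matrix_eq
    by (simp add: matrix_vector_mult_add_rdistrib matrix_vector_mul_assoc[symmetric] vec.add)
  have "invertible M"
    by (rule invertible_mod_nilpotent_range[OF nilpotent MX DX D])
      (auto simp: M_def matrix_vector_mult_add_rdistrib matrix_vector_mul_assoc[symmetric])
  moreover have "\<forall>i\<in>{1..t}. M *v v i = c i *s v i + X *v y i"
    using Dv Yv by (simp add: M_def matrix_vector_mult_add_rdistrib matrix_vector_mul_assoc[symmetric])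
  ultimately show ?thesis
    using MX by blast
qed

lemma vector_decomposition:
  "\<exists>c y. w = (\<Sum>i=1..t. c i *s v i + X *v y i) \<and> (\<forall>i\<in>{1..t}. mpow_app X (a i) (y i) = 0)"
proof -
  have "w \<in> vec.span (jb_vec ` J)"
    by (simp add: jb_span)
  then have "w \<in> range (\<lambda>c. \<Sum>x\<in>jb_vec ` J. c x *s x)"
    by (simp only: vec.span_finite[OF finite_imageI[OF finite_jb_index]])
  then obtain c where "w = (\<Sum>x\<in>jb_vec ` J. c x *s x)"
    by blast
  also have "\<dots> = (\<Sum>x\<in>J. c (jb_vec x) *s jb_vec x)"
    by (simp add: sum.reindex[OF inj_on_jb_vec])
  also have "\<dots> = (\<Sum>i=1..t. \<Sum>k<a i. c (jb_vec (i, k)) *s mpow_app X k (v i))"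
    by (simp add: jb_index_eq_Sigma sum.Sigma jb_vec_def split_def)
  finally have w: "w = (\<Sum>i=1..t. \<Sum>k<a i. c (jb_vec (i, k)) *s mpow_app X k (v i))" .
  define y where "y i = (\<Sum>k<a i. c (jb_vec (i, Suc k)) *s mpow_app X k (v i))" for i
  have "w = (\<Sum>i=1..t. c (jb_vec (i, 0)) *s v i + X *v y i)"
    unfolding w y_def
    by (rule sum.cong[OF refl], rule sum_mpow_app_shift, rule mpow_app_part_vanish)
  moreover have "mpow_app X (a i) (y i) = 0" if "i \<in> {1..t}" for i
    using that by (simp add: y_def mpow_app_commute_pow[of X "a i"] mpow_app_part_vanish)
  ultimately show ?thesis
    by (intro exI[of _ "\<lambda>i. c (jb_vec (i, 0))"] exI[of _ y]) blast
qed

end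

lemma sum_split_at:
  fixes q t :: nat
  assumes "q \<le> t"
  shows "(\<Sum>i=1..t. if i \<le> q then f i else g i) = (\<Sum>i=1..q. f i) + (\<Sum>i=Suc q..t. g i)"
proof -
  have "{1..t} = {1..q} \<union> {Suc q..t}"
    using assms by auto
  then have "(\<Sum>i=1..t. if i \<le> q then f i else g i)
      = (\<Sum>i=1..q. if i \<le> q then f i else g i) + (\<Sum>i=Suc q..t. if i \<le> q then f i else g i)"
    by (simp add: sum.union_disjoint)
  then show ?thesis
    by simp
qed

locale jordan_enhanced = jordan_nilpotent X a t v
  for X :: "'a::field^'n::finite^'n" and a t v +
  fixes q :: nat
  assumes q_le: "q \<le> t"
begin

definition w_hat :: "'a^'n" where
  "w_hat = (\<Sum>i=1..q. \<Sum>k=1..<a i. mpow_app X k (v i)) +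
           (\<Sum>i=Suc q..t. \<Sum>k=0..<a i. mpow_app X k (v i))"

definition block_end :: nat where
  "block_end = (GREATEST i. i \<le> t \<and> a i = a (Suc q))"

abbreviation u :: "'a^'n" where
  "u \<equiv> enh_vec a t v q"

lemma block_end_bounds:
  assumes "q < t"
  shows "Suc q \<le> block_end" "block_end \<le> t" "a block_end = a (Suc q)"
proof -
  have "Suc q \<le> t \<and> a (Suc q) = a (Suc q)"
    using assms by simp
  then show "Suc q \<le> block_end"
    unfolding block_end_def by (intro Greatest_le_nat[where b = t]) auto
  have "block_end \<le> t \<and> a block_end = a (Suc q)"
    unfolding block_end_def using \<open>Suc q \<le> t \<and> _\<close> by (rule GreatestI_nat[where b = t]) auto
  then show "block_end \<le> t" "a block_end = a (Suc q)"
    by auto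
qed

lemma u_eq: "u = (if q < t then v block_end else 0)"
  unfolding enh_vec_def block_end_def using q_le by auto

lemma u_eq_sum: "u = (\<Sum>i=1..t. if q < t \<and> i = block_end then v i else 0)"
proof (cases "q < t")
  case True
  then show ?thesis
    using block_end_bounds[OF True] by (simp add: u_eq sum.delta')
qed (simp add: u_eq)

lemma mpow_app_block_end_vanish:
  "q < t \<Longrightarrow> i \<in> {Suc q..t} \<Longrightarrow> mpow_app X (a block_end) (v i) = 0"
  using block_end_bounds part_antimono[of "Suc q" i] by (intro mpow_app_vanish) auto

lemma X_cyclic_sum:
  assumes i: "i \<in> {1..t}"
  shows "X *v (\<Sum>k<a i. mpow_app X k (v i)) = (\<Sum>k<a i. mpow_app X k (v i)) - v i"
proof -
  let ?e = "\<Sum>k<a i. mpow_app X k (v i)"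
  have "?e = (\<Sum>k<Suc (a i). mpow_app X k (v i))"
    using mpow_app_part_vanish[OF i] by simp
  also have "\<dots> = v i + X *v ?e"
    by (subst sum.lessThan_Suc_shift) (simp add: vec.sum mpow_app_Suc)
  finally show ?thesis
    by (simp add: algebra_simps)
qed

lemma one_minus_X_w_hat:
  "(mat 1 - X) *v w_hat = (\<Sum>i=1..t. if i \<le> q then X *v v i else v i)"
proof -
  define e where "e i = (\<Sum>k<a i. mpow_app X k (v i))" for i
  have "(\<Sum>k=1..<a i. mpow_app X k (v i)) = e i - v i" if "i \<in> {1..t}" for i
    using sum.atLeast_Suc_lessThan[OF part_pos[OF that], of "\<lambda>k. mpow_app X k (v i)"]
    by (simp add: e_def atLeast0LessThan)
  then have "w_hat = (\<Sum>i=1..q. e i - v i) + (\<Sum>i=Suc q..t. e i)"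
    unfolding w_hat_def using q_le
    by (intro arg_cong2[where f = "(+)"] sum.cong) (auto simp: e_def atLeast0LessThan)
  also have "\<dots> = (\<Sum>i=1..t. if i \<le> q then e i - v i else e i)"
    by (rule sum_split_at[OF q_le, symmetric])
  also have "(mat 1 - X) *v \<dots> = (\<Sum>i=1..t. if i \<le> q then X *v v i else v i)"
    unfolding vec.sum
    by (rule sum.cong) (simp_all add: vec.diff X_cyclic_sum[unfolded e_def[symmetric]]
        matrix_vector_mult_diff_rdistrib)
  finally show ?thesis .
qed

lemma invertible_one_minus_X: "invertible (mat 1 - X)"
  and one_minus_X_commute: "(mat 1 - X) ** X = X ** (mat 1 - X)"
proof -
  show comm: "(mat 1 - X) ** X = X ** (mat 1 - X)"
    unfolding matrix_eq
    by (simp add: matrix_vector_mul_assoc[symmetric] matrix_vector_mult_diff_rdistrib vec.diff)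
  have "(mat 1 - X) *v x = mat 1 *v x + X *v (- x)" for x
    by (simp add: matrix_vector_mult_diff_rdistrib vec.neg)
  then show "invertible (mat 1 - X)"
    by (intro invertible_mod_nilpotent_range[OF nilpotent comm, of "mat 1"])
      (auto simp: invertible_def)
qed

lemma square_zero_centralizer_exists:
  assumes "q < t"
  shows "\<exists>N. N ** X = X ** N \<and> N ** N = 0 \<and> N *v v block_end = (\<Sum>i=Suc q..t. v i) - v block_end"
proof -
  note bounds = block_end_bounds[OF assms]
  define S where "S = (\<Sum>i=Suc q..t. v i)"
  have "mpow_app X (a block_end) (S - v block_end) = 0"
    using mpow_app_block_end_vanish[OF assms] bounds by (simp add: S_def)
  then have "mpow_app X (a i) (if i = block_end then S - v block_end else 0) = 0" for i
    by (cases "i = block_end") simp_all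
  then obtain N where NX: "N ** X = X ** N"
    and Nv: "\<forall>i\<in>{1..t}. N *v v i = (if i = block_end then S - v block_end else 0)"
    using centralizer_exists[of "\<lambda>i. if i = block_end then S - v block_end else 0"] by blast
  text \<open>S - v block_end only involves generators other than v block_end, which N kills.\<close>
  have "N *v S = (\<Sum>i=Suc q..t. N *v v i)"
    by (simp add: S_def vec.sum)
  also have "\<dots> = (\<Sum>i=Suc q..t. if i = block_end then S - v block_end else 0)"
    using Nv by (intro sum.cong) auto
  also have "\<dots> = S - v block_end"
    using bounds by (simp add: sum.delta')
  finally have NS: "N *v S = S - v block_end" .
  have "(N ** N) *v v i = 0 *v v i" if i: "i \<in> {1..t}" for i
  proof (cases "i = block_end")
    case True
    then show ?thesis
      using Nv i NS by (simp add: vec.diff flip: matrix_vector_mul_assoc)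
  next
    case False
    then show ?thesis
      using Nv i by (simp flip: matrix_vector_mul_assoc)
  qed
  moreover have "0 ** X = X ** (0 :: 'a^'n^'n)"
    unfolding matrix_eq by (simp add: matrix_vector_mul_assoc[symmetric])
  ultimately have "N ** N = 0"
    using centralizer_eq[OF centralizer_mult[OF NX NX]] by blast
  moreover have "N *v v block_end = S - v block_end"
    using Nv bounds by simp
  ultimately show ?thesis
    unfolding S_def using NX by blast
qed

lemma centralizer_maps_u:
  "\<exists>g. invertible g \<and> g ** X = X ** g \<and> g *v u = (\<Sum>i=Suc q..t. v i)"
proof (cases "q < t")
  case False
  then have "u = 0"
    by (simp add: u_eq)
  moreover have "(\<Sum>i=Suc q..t. v i) = 0"
    using False q_le by simp
  ultimately show ?thesis
    by (intro exI[of _ "mat 1"]) (auto simp: invertible_def)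
next
  case True
  then obtain N where NX: "N ** X = X ** N" and NN: "N ** N = 0"
    and Nu: "N *v v block_end = (\<Sum>i=Suc q..t. v i) - v block_end"
    using square_zero_centralizer_exists by blast
  have NXv: "N *v (X *v x) = X *v (N *v x)" for x
    by (simp add: matrix_vector_mul_assoc NX)
  have "invertible (mat 1 + N)"
    using NN by (rule invertible_mat_1_add_square_zero)
  moreover have "(mat 1 + N) ** X = X ** (mat 1 + N)"
    unfolding matrix_eq
    by (simp add: matrix_vector_mult_add_rdistrib vec.add matrix_vector_mul_assoc[symmetric] NXv)
  moreover have "(mat 1 + N) *v u = (\<Sum>i=Suc q..t. v i)"
    using True Nu by (simp add: u_eq matrix_vector_mult_add_rdistrib)
  ultimately show ?thesis
    by blast
qed

lemma w_hat_in_centralizer_orbit: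
  "\<exists>g w. invertible g \<and> g ** X = X ** g \<and> w_hat = g *v (u + X *v w)"
proof -
  obtain g where g: "invertible g" and gX: "g ** X = X ** g"
    and gu: "g *v u = (\<Sum>i=Suc q..t. v i)"
    using centralizer_maps_u by blast
  define y where "y = (\<Sum>i=1..q. v i) + w_hat"
  have "w_hat = (mat 1 - X) *v w_hat + X *v w_hat"
    by (simp add: matrix_vector_mult_diff_rdistrib)
  also have "\<dots> = g *v u + X *v y"
    unfolding one_minus_X_w_hat sum_split_at[OF q_le] gu y_def
    by (simp add: vec.sum vec.add)
  also have "X *v y = g *v (X *v (matrix_inv g *v y))"
    by (metis gX matrix_inv_right[OF g] matrix_mul_assoc matrix_mul_rid matrix_vector_mul_assoc)
  finally have "w_hat = g *v (u + X *v (matrix_inv g *v y))"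
    by (simp add: vec.add)
  with g gX show ?thesis
    by blast
qed

definition w_dir :: "'a^'n" where
  "w_dir = (\<Sum>i=1..t. if i \<le> q then X *v v i else if q < t \<and> i = block_end then 0 else v i)"

text \<open>The witness is M (1 - X) with M in the centralizer of X: the factor 1 - X turns w_hat into
  a combination of the generators v i, and M may send each v i to any nonzero multiple of
  itself modulo the range of X.\<close>
lemma centralizer_orbit_line_point:
  assumes w: "w = (\<Sum>i=1..t. c i *s v i + X *v y i)"
    and y: "\<And>i. i \<in> {1..t} \<Longrightarrow> mpow_app X (a i) (y i) = 0"
    and s: "s \<noteq> 0" "\<And>i. i \<in> {1..t} \<Longrightarrow> s + c i \<noteq> 0"
  shows "\<exists>K. invertible K \<and> K ** X = X ** K \<and> K *v w_hat = u + X *v w + s *s w_dir"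
proof -
  define is_end where "is_end i \<longleftrightarrow> q < t \<and> i = block_end" for i
  have end_gt: "is_end i \<Longrightarrow> q < i" for i
    using block_end_bounds by (auto simp: is_end_def)
  define l where "l i = (if i \<le> q then s + c i else if is_end i then 1 else s)" for i
  define z where "z i = (if i \<le> q then y i else c i *s v i + X *v y i)" for i
  have "mpow_app X (a i) (z i) = 0" if "i \<in> {1..t}" for i
    using y[OF that] that
    by (simp add: z_def mpow_app_part_vanish mpow_app_Suc_right[symmetric] mpow_app_Suc)
  moreover have "l i \<noteq> 0" if "i \<in> {1..t}" for i
    using s that by (simp add: l_def)
  ultimately obtain M where M: "invertible M" and MX: "M ** X = X ** M"
    and Mv: "\<forall>i\<in>{1..t}. M *v v i = l i *s v i + X *v z i"
    using invertible_centralizer_exists[of l z] by blast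
  have MXv: "M *v (X *v x) = X *v (M *v x)" for x
    by (simp add: matrix_vector_mul_assoc MX)
  define K where "K = M ** (mat 1 - X)"
  have "K *v w_hat = M *v ((mat 1 - X) *v w_hat)"
    by (simp add: K_def matrix_vector_mul_assoc)
  also have "\<dots> = (\<Sum>i=1..t. if i \<le> q then X *v (M *v v i) else M *v v i)"
    unfolding one_minus_X_w_hat vec.sum by (rule sum.cong) (simp_all add: MXv)
  also have "\<dots> = (\<Sum>i=1..t. (if is_end i then v i else 0) + X *v (c i *s v i + X *v y i)
      + s *s (if i \<le> q then X *v v i else if is_end i then 0 else v i))"
    using Mv by (intro sum.cong refl) (auto simp: l_def z_def vec.add vec.scale
        scale_left_distrib dest: end_gt)
  also have "\<dots> = u + X *v w + s *s w_dir"
    unfolding is_end_def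
    by (simp add: sum.distrib u_eq_sum w w_dir_def vec.add vec.sum vec.scale_sum_right)
  finally show ?thesis
    using invertible_mult[OF M invertible_one_minus_X] centralizer_mult[OF MX one_minus_X_commute]
    unfolding K_def by blast
qed

lemma infinite_centralizer_orbit_line:
  assumes "infinite (UNIV :: 'a set)"
  shows "infinite {s. \<exists>K. invertible K \<and> K ** X = X ** K \<and> K *v w_hat = u + X *v w + s *s w_dir}"
proof -
  obtain c y where w: "w = (\<Sum>i=1..t. c i *s v i + X *v y i)"
    and y: "\<forall>i\<in>{1..t}. mpow_app X (a i) (y i) = 0"
    using vector_decomposition by blast
  have "UNIV - insert 0 ((\<lambda>i. - c i) ` {1..t})
      \<subseteq> {s. \<exists>K. invertible K \<and> K ** X = X ** K \<and> K *v w_hat = u + X *v w + s *s w_dir}"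
  proof
    fix s
    assume "s \<in> UNIV - insert 0 ((\<lambda>i. - c i) ` {1..t})"
    then have "s \<noteq> 0" "\<And>i. i \<in> {1..t} \<Longrightarrow> s + c i \<noteq> 0"
      by (auto simp flip: eq_neg_iff_add_eq_0)
    then show "s \<in> {s. \<exists>K. invertible K \<and> K ** X = X ** K \<and> K *v w_hat = u + X *v w + s *s w_dir}"
      using centralizer_orbit_line_point[OF w] y by blast
  qed
  moreover have "infinite (UNIV - insert 0 ((\<lambda>i. - c i) ` {1..t}))"
    using assms by (simp add: Diff_infinite_finite)
  ultimately show ?thesis
    using infinite_super by blast
qed

lemma GL_orbit_w_hat_subset: "GL_orbit (X, w_hat) \<subseteq> sdp_orbit (X, u)"
proof -
  obtain g w where g: "invertible g" "g ** X = X ** g" and w: "w_hat = g *v (u + X *v w)"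
    using w_hat_in_centralizer_orbit by blast
  have "GL_orbit (X, w_hat) = GL_orbit (X, u + X *v w)"
    unfolding w by (rule GL_orbit_centralizer[OF g])
  then show ?thesis
    unfolding sdp_orbit_eq_Union_GL_orbit by blast
qed

lemma sdp_orbit_subset_closure:
  assumes "infinite (UNIV :: 'a set)"
  shows "sdp_orbit (X, u) \<subseteq> zariski_closure (GL_orbit (X, w_hat))"
proof
  fix p
  assume "p \<in> sdp_orbit (X, u)"
  then obtain w g where g: "invertible g"
    and p: "p = (g ** X ** matrix_inv g, g *v (u + X *v w))"
    unfolding sdp_orbit_eq_Union_GL_orbit GL_orbit_def by auto
  let ?line = "\<lambda>s. (g ** X ** matrix_inv g, g *v (u + X *v w) + s *s (g *v w_dir))"
  have "{s. \<exists>K. invertible K \<and> K ** X = X ** K \<and> K *v w_hat = u + X *v w + s *s w_dir}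
      \<subseteq> {s. ?line s \<in> GL_orbit (X, w_hat)}"
  proof safe
    fix s K
    assume K: "invertible K" "K ** X = X ** K" and Kw: "K *v w_hat = u + X *v w + s *s w_dir"
    have "?line s = (g ** X ** matrix_inv g, g *v (K *v w_hat))"
      by (simp add: Kw vec.add vec.scale)
    also have "\<dots> \<in> GL_orbit (X, K *v w_hat)"
      unfolding GL_orbit_def using g by auto
    finally show "?line s \<in> GL_orbit (X, w_hat)"
      using GL_orbit_centralizer[OF K] by blast
  qed
  then have "infinite {s. ?line s \<in> GL_orbit (X, w_hat)}"
    using infinite_centralizer_orbit_line[OF assms] infinite_super by blast
  then show "p \<in> zariski_closure (GL_orbit (X, w_hat))"
    unfolding p by (rule zariski_closure_line)
qed

lemma zariski_closure_sdp_orbit: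
  assumes "infinite (UNIV :: 'a set)"
  shows "zariski_closure (sdp_orbit (X, u)) = zariski_closure (GL_orbit (X, w_hat))"
proof
  show "zariski_closure (sdp_orbit (X, u)) \<subseteq> zariski_closure (GL_orbit (X, w_hat))"
    by (rule zariski_closure_minimal[OF sdp_orbit_subset_closure[OF assms]])
  show "zariski_closure (GL_orbit (X, w_hat)) \<subseteq> zariski_closure (sdp_orbit (X, u))"
    by (rule zariski_closure_mono[OF GL_orbit_w_hat_subset])
qed

end

theorem proposition4p12:
  fixes X :: "'a::alg_closed_field^'n::finite^'n"
    and a :: "nat \<Rightarrow> nat" and t q :: nat
    and v :: "nat \<Rightarrow> 'a^'n"
  assumes part: "is_partition CARD('n) a t"
    and enh: "enhanced_index a t q"
    and jb: "jordan_basis X a t v"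
  shows "zariski_closure (enh_orbit X a t v q) =
         zariski_closure (GL_orbit (X,
            (\<Sum>i=1..q. \<Sum>k=1..<a i. mpow_app X k (v i)) +
            (\<Sum>i=Suc q..t. \<Sum>k=0..<a i. mpow_app X k (v i))))"
proof -
  interpret jordan_enhanced X a t v q
    using part jb enh by unfold_locales (auto simp: enhanced_index_def)
  show ?thesis
    using zariski_closure_sdp_orbit[OF infinite_UNIV_alg_closed_field]
    by (simp add: enh_orbit_def w_hat_def)
qed

end
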